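(* Let $p\ge3$ be real and $k_p=[(p+1)/2]$ (integer part). Then $$\sum_{k=1}^{k_p}\binom pk\mathrm B(k,p-k)\le4\log p.$$ More generally, for every $a>1$ there is a constant $0<C_a<\infty$ depending only on $a$ such that for all $p\ge3$, $$\sum_{k=1}^{k_p}\binom pk\mathrm B(ak,a(p-k))\le C_a(ap)^{1-a},\qquad\sum_{k=0}^{k_p-1}\binom{p-2}{k}\mathrm B(a(k+1),a(p-k-1))\le C_a(ap)^{-a}.$$
   Context: $\mathrm B(x,y)=\int_0^1t^{x-1}(1-t)^{y-1}dt$ is the beta function. For real $p$ and integer $k\ge1$, $\binom pk=\frac{p(p-1)\cdots(p-k+1)}{k!}$, and $\binom p0=1$. *)

theory Defs
  imports "HOL-Analysis.Analysis"
begin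

end

theory Submission
  imports Defs
begin

(* For 1 <= k < p the Gamma-function representations give the exact values
   binom(p,k) B(k,p-k) = p/(k(p-k)) and binom(p-2,k-1) B(k,p-k) = 1/(p-1).  The first claim
   (exponent 1) follows by splitting p/(k(p-k)) = 1/k + 1/(p-k) and bounding the harmonic sum
   by 1 + ln p.

   For exponent a > 1 we compare integrands: t^(ak-1)(1-t)^(a(p-k)-1) is the kernel of
   B(k,p-k) times (t^k(1-t)^(p-k))^(a-1), and t^k(1-t)^(p-k) <= (k/p)^k.  Hence every summand
   of the scaled sums is at most (k/p)^((a-1)k) times its value at exponent 1.  In the
   summation range k <= (p+1)/2 <= 2p/3, the elementary estimate k (2/3)^(k-1) <= 4 (5/6)^(k-1)
   turns this weight into 4^(a-1) p^(1-a) ((5/6)^(a-1))^(k-1), so both sums are dominated by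
   geometric series with ratio (5/6)^(a-1) < 1, giving the orders p^(1-a) and p^(-a) with an
   explicit constant depending only on a. *)

lemma gbinomial_nonneg_real:
  fixes x :: real
  assumes "real k < x + 1"
  shows "0 \<le> x gchoose k"
proof -
  have "x + 1 \<notin> \<int>\<^sub>\<le>\<^sub>0" using assms by (auto elim!: nonpos_Ints_cases)
  moreover have "Gamma (x + 1) > 0" "Gamma (x - real k + 1) > 0"
    using assms by (auto intro!: Gamma_real_pos)
  ultimately show ?thesis using gbinomial_Gamma[of x k] by simp
qed

lemma gbinomial_times_Beta:
  fixes p :: real
  assumes "1 \<le> k" "real k < p"
  shows "(p gchoose k) * Beta (real k) (p - real k) = p / (real k * (p - real k))"
proof -
  obtain m where m: "k = Suc m" using assms by (cases k) auto
  have "p + 1 \<notin> \<int>\<^sub>\<le>\<^sub>0" using assms by (auto elim!: nonpos_Ints_cases)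
  hence binom: "(p gchoose k) = Gamma (p + 1) / (fact k * Gamma (p - real k + 1))"
    by (simp add: gbinomial_Gamma)
  have Gamma_p: "Gamma (p + 1) = p * Gamma p"
    using Gamma_plus1[of p] assms nonpos_Ints_nonpos[of p] by force
  have Gamma_pk: "Gamma (p - real k + 1) = (p - real k) * Gamma (p - real k)"
    using Gamma_plus1[of "p - real k"] assms nonpos_Ints_nonpos[of "p - real k"] by force
  have Gamma_k: "Gamma (real k) = fact m" and fact_k: "fact k = real k * fact m"
    using Gamma_fact[of m] m by simp_all
  have "Gamma p > 0" "Gamma (p - real k) > 0"
    using assms by (auto intro!: Gamma_real_pos)
  hence "Gamma p \<noteq> 0" "Gamma (p - real k) \<noteq> 0" "p - real k \<noteq> 0" "real k \<noteq> 0"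
    using assms by linarith+
  thus ?thesis
    unfolding binom Beta_def Gamma_p Gamma_pk Gamma_k fact_k by (simp add: field_simps)
qed

lemma shifted_gbinomial_times_Beta:
  fixes p :: real
  assumes "real k + 1 < p"
  shows "((p - 2) gchoose k) * Beta (real k + 1) (p - real k - 1) = 1 / (p - 1)"
proof -
  have "p - 2 + 1 \<notin> \<int>\<^sub>\<le>\<^sub>0" using assms by (auto elim!: nonpos_Ints_cases)
  hence binom: "((p - 2) gchoose k) = Gamma (p - 1) / (fact k * Gamma (p - real k - 1))"
    using gbinomial_Gamma[of "p - 2" k] by (simp add: algebra_simps)
  have Gamma_p: "Gamma p = (p - 1) * Gamma (p - 1)"
    using Gamma_plus1[of "p - 1"] assms nonpos_Ints_nonpos[of "p - 1"] by force
  have Gamma_k: "Gamma (real k + 1) = fact k" using Gamma_fact[of k] by (simp add: add.commute)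
  have "Gamma (p - 1) > 0" "Gamma (p - real k - 1) > 0"
    using assms by (auto intro!: Gamma_real_pos)
  hence "((p - 2) gchoose k) * Beta (real k + 1) (p - real k - 1) = Gamma (p - 1) / Gamma p"
    unfolding binom Beta_def Gamma_k by (simp add: field_simps)
  also have "\<dots> = 1 / (p - 1)"
    unfolding Gamma_p using \<open>Gamma (p - 1) > 0\<close> by simp
  finally show ?thesis .
qed

(* The Beta kernel t^k (1-t)^(p-k) on (0,1) is at most (k/p)^k (its maximum is at t = k/p);
   proved from ln x <= x - 1 applied to tp/k and to 1 - t. *)
lemma Beta_kernel_le:
  fixes k p t :: real
  assumes "0 < t" "t < 1" "0 < k" "k < p"
  shows "t powr k * (1 - t) powr (p - k) \<le> (k / p) powr k"
proof -
  have "ln (t * p / k) \<le> t * p / k - 1" using assms by (intro ln_le_minus_one) auto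
  moreover have "ln (1 - t) \<le> - t" using assms ln_le_minus_one[of "1 - t"] by simp
  moreover have "ln (t * p / k) = ln t - ln (k / p)" using assms by (simp add: ln_div ln_mult)
  ultimately have "k * (ln t - ln (k / p)) + (p - k) * ln (1 - t) \<le> k * (t * p / k - 1) + (p - k) * (- t)"
    using assms by (intro add_mono mult_left_mono) auto
  also have "\<dots> = - k * (1 - t)" using assms by (simp add: field_simps)
  also have "\<dots> \<le> 0" using assms by simp
  finally have "ln (t powr k * (1 - t) powr (p - k)) \<le> ln ((k / p) powr k)"
    using assms by (simp add: ln_mult ln_powr algebra_simps)
  thus ?thesis using assms by (subst (asm) ln_le_cancel_iff) auto
qed

(* Raising the Beta exponents by a factor a >= 1 costs at most the (a-1)-th power of the
   kernel maximum: compare the integrands pointwise using the previous lemma. *)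
lemma Beta_scaled_le:
  fixes a k p :: real
  assumes "1 \<le> a" "0 < k" "k < p"
  shows "Beta (a * k) (a * (p - k)) \<le> (k / p) powr ((a - 1) * k) * Beta k (p - k)"
proof -
  define M where "M = (k / p) powr ((a - 1) * k)"
  have lhs: "((\<lambda>t. t powr (a * k - 1) * (1 - t) powr (a * (p - k) - 1))
               has_integral Beta (a * k) (a * (p - k))) {0..1}"
    using assms by (intro has_integral_Beta_real) auto
  have rhs: "((\<lambda>t. M * (t powr (k - 1) * (1 - t) powr (p - k - 1)))
               has_integral M * Beta k (p - k)) {0..1}"
    using assms by (intro has_integral_mult_right has_integral_Beta_real) auto
  have "t powr (a * k - 1) * (1 - t) powr (a * (p - k) - 1)
          \<le> M * (t powr (k - 1) * (1 - t) powr (p - k - 1))" if "0 < t" "t < 1" for t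
  proof -
    have "t powr (a * k - 1) * (1 - t) powr (a * (p - k) - 1)
        = (t powr k * (1 - t) powr (p - k)) powr (a - 1) * (t powr (k - 1) * (1 - t) powr (p - k - 1))"
      using that by (simp add: powr_mult powr_powr powr_add[symmetric] algebra_simps)
    also have "\<dots> \<le> ((k / p) powr k) powr (a - 1) * (t powr (k - 1) * (1 - t) powr (p - k - 1))"
      using Beta_kernel_le[OF that assms(2,3)] assms by (intro mult_right_mono powr_mono2) auto
    also have "((k / p) powr k) powr (a - 1) = M"
      unfolding M_def by (simp add: powr_powr mult.commute)
    finally show ?thesis .
  qed
  hence "Beta (a * k) (a * (p - k)) \<le> M * Beta k (p - k)"
    by (intro has_integral_le[OF lhs rhs]) (auto simp: less_eq_real_def)
  thus ?thesis unfolding M_def .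
qed

lemma gbinomial_times_scaled_Beta_le:
  fixes a p :: real
  assumes "1 \<le> a" "1 \<le> k" "real k < p"
  shows "(p gchoose k) * Beta (a * real k) (a * (p - real k))
           \<le> (real k / p) powr ((a - 1) * real k) * (p / (real k * (p - real k)))"
proof -
  have "(p gchoose k) * Beta (a * real k) (a * (p - real k))
      \<le> (p gchoose k) * ((real k / p) powr ((a - 1) * real k) * Beta (real k) (p - real k))"
    using assms by (intro mult_left_mono Beta_scaled_le gbinomial_nonneg_real) auto
  also have "\<dots> = (real k / p) powr ((a - 1) * real k) * ((p gchoose k) * Beta (real k) (p - real k))"
    by (simp only: ac_simps)
  finally show ?thesis using gbinomial_times_Beta[OF assms(2,3)] by simp
qed

lemma shifted_gbinomial_times_scaled_Beta_le:
  fixes a p :: real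
  assumes "1 \<le> a" "real k + 1 < p"
  shows "((p - 2) gchoose k) * Beta (a * (real k + 1)) (a * (p - real k - 1))
           \<le> ((real k + 1) / p) powr ((a - 1) * (real k + 1)) / (p - 1)"
proof -
  have "Beta (a * (real k + 1)) (a * (p - real k - 1))
      \<le> ((real k + 1) / p) powr ((a - 1) * (real k + 1)) * Beta (real k + 1) (p - real k - 1)"
    using Beta_scaled_le[of a "real k + 1" p] assms by (simp add: diff_diff_eq)
  hence "((p - 2) gchoose k) * Beta (a * (real k + 1)) (a * (p - real k - 1))
      \<le> ((p - 2) gchoose k) * (((real k + 1) / p) powr ((a - 1) * (real k + 1))
            * Beta (real k + 1) (p - real k - 1))"
    using assms by (intro mult_left_mono gbinomial_nonneg_real) auto
  also have "\<dots> = ((real k + 1) / p) powr ((a - 1) * (real k + 1))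
                  * (((p - 2) gchoose k) * Beta (real k + 1) (p - real k - 1))"
    by (simp only: ac_simps)
  finally show ?thesis using shifted_gbinomial_times_Beta[OF assms(2)] by simp
qed

lemma linear_le_geometric: "real n \<le> 4 * (5/4::real) ^ (n - 1)"
proof (cases n)
  case (Suc m)
  have "1 + real m * (1/4) \<le> (1 + 1/4::real) ^ m" by (rule Bernoulli_inequality) simp
  thus ?thesis using Suc by simp
qed simp

lemma power_ratio_decay:
  fixes p :: real
  assumes "1 \<le> k" "0 < p" "real k \<le> 2/3 * p"
  shows "(real k / p) ^ k \<le> 4 / p * (5/6) ^ (k - 1)"
proof -
  obtain m where m: "k = Suc m" using assms by (cases k) auto
  have "(real k / p) ^ k = real k / p * (real k / p) ^ m" using m by simp
  also have "\<dots> \<le> real k / p * (2/3) ^ m"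
    using assms by (intro mult_left_mono power_mono) (auto simp: field_simps)
  also have "\<dots> \<le> 4 * (5/4) ^ m / p * (2/3) ^ m"
    using linear_le_geometric[of k] m assms by (intro mult_right_mono divide_right_mono) auto
  also have "\<dots> = 4 / p * (5/6) ^ (k - 1)"
    using m by (simp add: power_mult_distrib[symmetric])
  finally show ?thesis .
qed

lemma Beta_weight_decay:
  fixes a p :: real
  assumes "1 \<le> a" "1 \<le> k" "0 < p" "real k \<le> 2/3 * p"
  shows "(real k / p) powr ((a - 1) * real k)
           \<le> 4 powr (a - 1) * p powr (1 - a) * ((5/6) powr (a - 1)) ^ (k - 1)"
proof -
  have "(real k / p) powr ((a - 1) * real k) = ((real k / p) ^ k) powr (a - 1)"
    using assms by (simp add: powr_powr powr_realpow[symmetric] mult.commute)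
  also have "\<dots> \<le> (4 / p * (5/6) ^ (k - 1)) powr (a - 1)"
    using power_ratio_decay[OF assms(2-4)] assms by (intro powr_mono2) auto
  also have "\<dots> = 4 powr (a - 1) / p powr (a - 1) * ((5/6) powr (a - 1)) ^ (k - 1)"
    using assms by (simp add: powr_mult powr_divide powr_realpow[symmetric] powr_powr mult.commute)
  also have "4 powr (a - 1) / p powr (a - 1) = 4 powr (a - 1) * p powr (1 - a)"
    using powr_minus[of p "a - 1"] by (simp add: divide_inverse)
  finally show ?thesis .
qed

lemma half_range_bound:
  fixes p :: real
  assumes "3 \<le> p" "k \<le> nat \<lfloor>(p + 1) / 2\<rfloor>"
  shows "real k \<le> (p + 1) / 2"
proof -
  have "int k \<le> \<lfloor>(p + 1) / 2\<rfloor>" using assms le_nat_iff by fastforce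
  thus ?thesis by (metis floor_of_nat le_floor_iff of_int_of_nat_eq)
qed

lemma sum_inverse_le_ln:
  assumes "1 \<le> n"
  shows "(\<Sum>k=1..n. 1 / real k) \<le> 1 + ln (real n)"
proof -
  have "(\<Sum>k=1..n. 1 / real k) = harm n" by (simp add: harm_def divide_inverse)
  also have "\<dots> \<le> 1 + ln (real n)"
    using euler_mascheroni_sequence_decreasing[of 1 n] assms by (simp add: harm_def)
  finally show ?thesis .
qed

(* First claim: the summands are 1/k + 1/(p-k) <= 1/k + 2/(p-1); the harmonic part is at most
   1 + ln p and the rest at most 2, and 3 <= 3 ln p because p >= 3 > e. *)
lemma unit_Beta_sum_le:
  fixes p :: real
  assumes p: "3 \<le> p"
  shows "(\<Sum>k=1..nat \<lfloor>(p + 1) / 2\<rfloor>. (p gchoose k) * Beta (real k) (p - real k)) \<le> 4 * ln p"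
proof -
  define n where "n = nat \<lfloor>(p + 1) / 2\<rfloor>"
  have n: "1 \<le> n" "real n \<le> (p + 1) / 2"
    using half_range_bound[OF p, of n] p unfolding n_def by (auto simp: le_nat_iff le_floor_iff)
  have "(\<Sum>k=1..n. (p gchoose k) * Beta (real k) (p - real k)) \<le> (\<Sum>k=1..n. 1 / real k + 2 / (p - 1))"
  proof (rule sum_mono)
    fix k assume "k \<in> {1..n}"
    hence k: "1 \<le> k" "real k \<le> (p + 1) / 2" using half_range_bound[OF p] unfolding n_def by auto
    have "(p gchoose k) * Beta (real k) (p - real k) = p / (real k * (p - real k))"
      using gbinomial_times_Beta k p by simp
    also have "\<dots> = 1 / real k + 1 / (p - real k)" using k p by (simp add: field_simps)
    also have "1 / (p - real k) \<le> 2 / (p - 1)" using k p by (simp add: field_simps)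
    finally show "(p gchoose k) * Beta (real k) (p - real k) \<le> 1 / real k + 2 / (p - 1)" by simp
  qed
  also have "\<dots> = (\<Sum>k=1..n. 1 / real k) + real n * (2 / (p - 1))" by (simp add: sum.distrib)
  also have "real n * (2 / (p - 1)) \<le> 2" using n p by (simp add: field_simps)
  also have "(\<Sum>k=1..n. 1 / real k) \<le> 1 + ln (real n)" using sum_inverse_le_ln[OF n(1)] .
  also have "ln (real n) \<le> ln p" using n p by simp
  also have "1 \<le> ln p" using exp_le p ln_ge_iff[of p 1] by simp
  hence "1 + ln p + 2 \<le> 4 * ln p" by linarith
  finally show ?thesis unfolding n_def by simp
qed

(* The constant 4^(a-1) / (1 - (5/6)^(a-1)) obtained by summing the geometric decay bound. *)
definition Beta_sum_const :: "real \<Rightarrow> real" where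
  "Beta_sum_const a = 4 powr (a - 1) / (1 - (5/6) powr (a - 1))"

lemma geometric_ratio_bounds:
  fixes a :: real
  assumes "1 < a"
  shows "0 < (5/6::real) powr (a - 1)" "(5/6::real) powr (a - 1) < 1"
  using assms powr_less_mono2[of "a - 1" "5/6::real" 1] by auto

lemma Beta_sum_const_pos: "1 < a \<Longrightarrow> 0 < Beta_sum_const a"
  unfolding Beta_sum_const_def using geometric_ratio_bounds[of a] by simp

(* Second claim up to the constant: each summand is at most 3 (k/p)^((a-1)k), and these
   decay geometrically with leading term of order p^(1-a). *)
lemma scaled_Beta_sum_le:
  fixes a p :: real
  assumes a: "1 < a" and p: "3 \<le> p"
  shows "(\<Sum>k=1..nat \<lfloor>(p + 1) / 2\<rfloor>. (p gchoose k) * Beta (a * real k) (a * (p - real k)))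
           \<le> 3 * Beta_sum_const a * p powr (1 - a)"
proof -
  define n where "n = nat \<lfloor>(p + 1) / 2\<rfloor>"
  define \<rho> where "\<rho> = (5/6::real) powr (a - 1)"
  define B where "B = 4 powr (a - 1) * p powr (1 - a)"
  have \<rho>: "0 < \<rho>" "\<rho> < 1" unfolding \<rho>_def using geometric_ratio_bounds[OF a] .
  have "(\<Sum>k=1..n. (p gchoose k) * Beta (a * real k) (a * (p - real k))) \<le> (\<Sum>k=1..n. 3 * B * \<rho> ^ (k - 1))"
  proof (rule sum_mono)
    fix k assume "k \<in> {1..n}"
    hence k: "1 \<le> k" "real k \<le> (p + 1) / 2" using half_range_bound[OF p] unfolding n_def by auto
    have "p \<le> 3 * (p - real k)" using k p by simp
    also have "\<dots> \<le> 3 * (real k * (p - real k))"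
    proof -
      have "1 * (p - real k) \<le> real k * (p - real k)" using k p by (intro mult_right_mono) auto
      thus ?thesis by simp
    qed
    finally have "p / (real k * (p - real k)) \<le> 3"
      using k p by (simp add: divide_le_eq)
    hence "(p gchoose k) * Beta (a * real k) (a * (p - real k))
        \<le> (real k / p) powr ((a - 1) * real k) * 3"
      using a k p by (intro order_trans[OF gbinomial_times_scaled_Beta_le] mult_left_mono) auto
    also have "\<dots> \<le> B * \<rho> ^ (k - 1) * 3"
      using Beta_weight_decay[of a k p] a k p unfolding B_def \<rho>_def by (intro mult_right_mono) auto
    finally show "(p gchoose k) * Beta (a * real k) (a * (p - real k)) \<le> 3 * B * \<rho> ^ (k - 1)"
      by simp
  qed
  also have "\<dots> = 3 * B * (\<Sum>i<n. \<rho> ^ i)"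
    by (simp add: sum_distrib_left sum.atLeast1_atMost_eq)
  also have "\<dots> \<le> 3 * B * (1 / (1 - \<rho>))"
    using less_imp_le[OF geometric_sum_less[OF \<rho> finite_lessThan]] unfolding B_def
    by (intro mult_left_mono) auto
  also have "\<dots> = 3 * Beta_sum_const a * p powr (1 - a)"
    unfolding B_def Beta_sum_const_def \<rho>_def by simp
  finally show ?thesis unfolding n_def .
qed

(* Third claim up to the constant: now the unscaled value is 1/(p-1) <= 2/p, which
   contributes one more factor 1/p. *)
lemma shifted_scaled_Beta_sum_le:
  fixes a p :: real
  assumes a: "1 < a" and p: "3 \<le> p"
  shows "(\<Sum>k=0..<nat \<lfloor>(p + 1) / 2\<rfloor>. ((p - 2) gchoose k) * Beta (a * (real k + 1)) (a * (p - real k - 1)))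
           \<le> 2 * Beta_sum_const a * p powr (- a)"
proof -
  define n where "n = nat \<lfloor>(p + 1) / 2\<rfloor>"
  define \<rho> where "\<rho> = (5/6::real) powr (a - 1)"
  define B where "B = 4 powr (a - 1) * p powr (- a)"
  have \<rho>: "0 < \<rho>" "\<rho> < 1" unfolding \<rho>_def using geometric_ratio_bounds[OF a] .
  have p_scale: "p powr (1 - a) = p * p powr (- a)"
    using p powr_add[of p 1 "- a"] by simp
  have "(\<Sum>k=0..<n. ((p - 2) gchoose k) * Beta (a * (real k + 1)) (a * (p - real k - 1)))
      \<le> (\<Sum>k<n. 2 * B * \<rho> ^ k)"
    unfolding atLeast0LessThan
  proof (rule sum_mono)
    fix k assume "k \<in> {..<n}"
    hence k: "real k + 1 \<le> (p + 1) / 2"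
      using half_range_bound[OF p, of "Suc k"] unfolding n_def by auto
    have "((p - 2) gchoose k) * Beta (a * (real k + 1)) (a * (p - real k - 1))
        \<le> ((real k + 1) / p) powr ((a - 1) * (real k + 1)) * (2 / p)"
      using a k p by (intro order_trans[OF shifted_gbinomial_times_scaled_Beta_le])
        (auto simp: field_simps)
    also have "\<dots> \<le> 4 powr (a - 1) * p powr (1 - a) * \<rho> ^ k * (2 / p)"
      using Beta_weight_decay[of a "Suc k" p] a k p unfolding \<rho>_def
      by (intro mult_right_mono) (auto simp: add.commute)
    also have "\<dots> = 2 * B * \<rho> ^ k"
      unfolding B_def p_scale using p by (simp add: field_simps)
    finally show "((p - 2) gchoose k) * Beta (a * (real k + 1)) (a * (p - real k - 1)) \<le> 2 * B * \<rho> ^ k" .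
  qed
  also have "\<dots> = 2 * B * (\<Sum>k<n. \<rho> ^ k)"
    by (simp add: sum_distrib_left)
  also have "\<dots> \<le> 2 * B * (1 / (1 - \<rho>))"
    using less_imp_le[OF geometric_sum_less[OF \<rho> finite_lessThan]] unfolding B_def
    by (intro mult_left_mono) auto
  also have "\<dots> = 2 * Beta_sum_const a * p powr (- a)"
    unfolding B_def Beta_sum_const_def \<rho>_def by simp
  finally show ?thesis unfolding n_def .
qed

lemma scale_absorption:
  fixes a p K :: real
  assumes "1 < a" "0 < p" "0 \<le> K"
  shows "3 * K * p powr (1 - a) \<le> (3 * K * a powr a) * (a * p) powr (1 - a)"
    and "2 * K * p powr (- a) \<le> (3 * K * a powr a) * (a * p) powr (- a)"
proof -
  have "a powr a * a powr (1 - a) = a" and "a powr a * a powr (- a) = 1"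
    using assms by (simp_all flip: powr_add)
  hence scale1: "(3 * K * a powr a) * (a * p) powr (1 - a) = a * (3 * K * p powr (1 - a))"
    and scale2: "(3 * K * a powr a) * (a * p) powr (- a) = 3 * K * p powr (- a)"
    using assms by (simp_all add: powr_mult algebra_simps)
  have "0 \<le> 3 * K * p powr (1 - a)" using assms by simp
  thus "3 * K * p powr (1 - a) \<le> (3 * K * a powr a) * (a * p) powr (1 - a)"
    unfolding scale1 using mult_right_mono[of 1 a] assms by simp
  show "2 * K * p powr (- a) \<le> (3 * K * a powr a) * (a * p) powr (- a)"
    unfolding scale2 using assms by (intro mult_right_mono) auto
qed

theorem lemma3p3:
  shows "(\<forall>p::real. p \<ge> 3 \<longrightarrow>
            (\<Sum>k=1..nat \<lfloor>(p + 1) / 2\<rfloor>. (p gchoose k) * Beta (real k) (p - real k)) \<le> 4 * ln p)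
       \<and> (\<forall>a::real. a > 1 \<longrightarrow> (\<exists>C::real. C > 0 \<and> (\<forall>p::real. p \<ge> 3 \<longrightarrow>
            (\<Sum>k=1..nat \<lfloor>(p + 1) / 2\<rfloor>. (p gchoose k) * Beta (a * real k) (a * (p - real k)))
              \<le> C * (a * p) powr (1 - a)
          \<and> (\<Sum>k=0..<nat \<lfloor>(p + 1) / 2\<rfloor>. ((p - 2) gchoose k) * Beta (a * (real k + 1)) (a * (p - real k - 1)))
              \<le> C * (a * p) powr (- a))))"
proof (intro conjI allI impI)
  fix p :: real assume "p \<ge> 3"
  thus "(\<Sum>k=1..nat \<lfloor>(p + 1) / 2\<rfloor>. (p gchoose k) * Beta (real k) (p - real k)) \<le> 4 * ln p"
    by (rule unit_Beta_sum_le)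
next
  fix a :: real assume a: "a > 1"
  define K where "K = Beta_sum_const a"
  have K: "0 < K" unfolding K_def using Beta_sum_const_pos[OF a] .
  show "\<exists>C>0. \<forall>p\<ge>3.
          (\<Sum>k=1..nat \<lfloor>(p + 1) / 2\<rfloor>. (p gchoose k) * Beta (a * real k) (a * (p - real k)))
            \<le> C * (a * p) powr (1 - a)
        \<and> (\<Sum>k=0..<nat \<lfloor>(p + 1) / 2\<rfloor>. ((p - 2) gchoose k) * Beta (a * (real k + 1)) (a * (p - real k - 1)))
            \<le> C * (a * p) powr (- a)"
  proof (intro exI[of _ "3 * K * a powr a"] conjI allI impI)
    show "0 < 3 * K * a powr a" using K a by simp
    fix p :: real assume p: "3 \<le> p"
    show "(\<Sum>k=1..nat \<lfloor>(p + 1) / 2\<rfloor>. (p gchoose k) * Beta (a * real k) (a * (p - real k)))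
            \<le> 3 * K * a powr a * (a * p) powr (1 - a)"
      using scaled_Beta_sum_le[OF a p] scale_absorption(1)[OF a _ less_imp_le[OF K], of p] p
      unfolding K_def by linarith
    show "(\<Sum>k=0..<nat \<lfloor>(p + 1) / 2\<rfloor>. ((p - 2) gchoose k) * Beta (a * (real k + 1)) (a * (p - real k - 1)))
            \<le> 3 * K * a powr a * (a * p) powr (- a)"
      using shifted_scaled_Beta_sum_le[OF a p] scale_absorption(2)[OF a _ less_imp_le[OF K], of p] p
      unfolding K_def by linarith
  qed
qed

end
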